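(* For every simple type $A$, the topological space $\widehat{\Lambda}(A)$ of profinite $\lambda$-terms of type $A$ is (homeomorphic to) the Stone dual space of the Boolean algebra $\mathrm{Reg}(A)$. In particular, $\mathrm{Reg}(A)$ is isomorphic to the Boolean algebra of clopen subsets of $\widehat{\Lambda}(A)$.
   Context: Simple types are generated from a base type $o$ by $\Rightarrow$; $\Lambda(A)$ is the set of closed simply typed $\lambda$-terms of type $A$ modulo $\beta\eta$. For a finite set $Q$: $[\![o]\!]_Q = Q$, $[\![A\Rightarrow B]\!]_Q$ = all functions $[\![A]\!]_Q \to [\![B]\!]_Q$, $[\![M]\!]_Q$ the standard interpretation, $D_Q(A) = \{[\![M]\!]_Q : M \in \Lambda(A)\}$. $\mathrm{Reg}_Q(A) = \{\{M : [\![M]\!]_Q \in F\} : F \subseteq [\![A]\!]_Q\}$ and $\mathrm{Reg}(A) = \bigcup_{Q\text{ finite}} \mathrm{Reg}_Q(A) \subseteq \wp(\Lambda(A))$, which is a Boolean algebra. Logical relations: for $R \subseteq Q\times Q'$, $[\![o]\!]_R = R$, $[\![A\Rightarrow B]\!]_R = \{(g,h) : \forall (x,y)\in[\![A]\!]_R,\ (g(x),h(y))\in[\![B]\!]_R\}$. A partial surjection $f \colon Q \twoheadrightarrow Q'$ is a relation that is the graph of a partial function surjective onto $Q'$. A profinite $\lambda$-term of type $A$ is a family $\theta=(\theta_Q)$, $Q$ ranging over finite sets, with $\theta_Q \in D_Q(A)$ and $(\theta_Q,\theta_{Q'}) \in [\![A]\!]_f$ for every partial surjection $f\colon Q\twoheadrightarrow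 Q'$. $\widehat{\Lambda}(A)$ is the set of these, with topology having basis $U_{Q,q} = \{\theta : \theta_Q = q\}$ for $Q$ finite and $q \in D_Q(A)$. *)

theory Defs
  imports "HOL-Analysis.Analysis" "HOL-Library.FSet"
begin

datatype ty = TO | TArr ty ty

text \<open>Church-style raw lambda-terms with de Bruijn indices.\<close>
datatype lterm = LVar nat | LApp lterm lterm | LAbs ty lterm

primrec lift :: "lterm \<Rightarrow> nat \<Rightarrow> lterm" where
  "lift (LVar i) k = (if i < k then LVar i else LVar (Suc i))"
| "lift (LApp s t) k = LApp (lift s k) (lift t k)"
| "lift (LAbs T s) k = LAbs T (lift s (Suc k))"

primrec subst :: "lterm \<Rightarrow> nat \<Rightarrow> lterm \<Rightarrow> lterm" where
  "subst (LVar i) k u = (if i < k then LVar i else if i = k then u else LVar (i - 1))"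
| "subst (LApp s t) k u = LApp (subst s k u) (subst t k u)"
| "subst (LAbs T s) k u = LAbs T (subst s (Suc k) (lift u 0))"

inductive be_step :: "lterm \<Rightarrow> lterm \<Rightarrow> bool" where
  beta: "be_step (LApp (LAbs T s) t) (subst s 0 t)"
| eta: "be_step (LAbs T (LApp (lift s 0) (LVar 0))) s"
| appL: "be_step s s' \<Longrightarrow> be_step (LApp s t) (LApp s' t)"
| appR: "be_step t t' \<Longrightarrow> be_step (LApp s t) (LApp s t')"
| abs: "be_step s s' \<Longrightarrow> be_step (LAbs T s) (LAbs T s')"

inductive typing :: "ty list \<Rightarrow> lterm \<Rightarrow> ty \<Rightarrow> bool" where
  tvar: "i < length \<Gamma> \<Longrightarrow> typing \<Gamma> (LVar i) (\<Gamma> ! i)"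
| tapp: "typing \<Gamma> s (TArr T U) \<Longrightarrow> typing \<Gamma> t T \<Longrightarrow> typing \<Gamma> (LApp s t) U"
| tabs: "typing (T # \<Gamma>) s U \<Longrightarrow> typing \<Gamma> (LAbs T s) (TArr T U)"

definition Terms :: "ty \<Rightarrow> lterm set" where
  "Terms A = {M. typing [] M A}"

definition conv :: "ty \<Rightarrow> lterm rel" where
  "conv A = (let r = {(M, N). M \<in> Terms A \<and> N \<in> Terms A \<and> be_step M N}
             in (r \<union> r\<inverse>)\<^sup>*)"

definition Lam :: "ty \<Rightarrow> lterm set set" where
  "Lam A = Terms A // conv A"

text \<open>Semantic values: base elements (elements of Q, Q a finite set of naturals)
  and finite functions given by their graphs.\<close>
datatype sem = Base nat | Fn "(sem \<times> sem) fset"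

fun app :: "sem \<Rightarrow> sem \<Rightarrow> sem" where
  "app (Fn g) x = (THE y. (x, y) |\<in>| g)"
| "app (Base n) x = undefined"

primrec interp :: "nat set \<Rightarrow> ty \<Rightarrow> sem set" where
  "interp Q TO = Base ` Q"
| "interp Q (TArr A B) =
     {Fn g | g. fset g \<subseteq> interp Q A \<times> interp Q B \<and>
                (\<forall>x\<in>interp Q A. \<exists>!y. (x, y) \<in> fset g)}"

fun eval :: "nat set \<Rightarrow> sem list \<Rightarrow> lterm \<Rightarrow> sem" where
  "eval Q \<rho> (LVar i) = \<rho> ! i"
| "eval Q \<rho> (LApp s t) = app (eval Q \<rho> s) (eval Q \<rho> t)"
| "eval Q \<rho> (LAbs T s) = Fn (Abs_fset ((\<lambda>x. (x, eval Q (x # \<rho>) s)) ` interp Q T))"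

definition den :: "nat set \<Rightarrow> lterm set \<Rightarrow> sem" where
  "den Q c = eval Q [] (SOME M. M \<in> c)"

definition D :: "nat set \<Rightarrow> ty \<Rightarrow> sem set" where
  "D Q A = den Q ` Lam A"

definition Reg_Q :: "nat set \<Rightarrow> ty \<Rightarrow> lterm set set set" where
  "Reg_Q Q A = {{c \<in> Lam A. den Q c \<in> F} | F. F \<subseteq> interp Q A}"

definition Reg :: "ty \<Rightarrow> lterm set set set" where
  "Reg A = (\<Union>Q\<in>{Q. finite Q}. Reg_Q Q A)"

primrec lrel :: "nat set \<Rightarrow> nat set \<Rightarrow> (nat \<times> nat) set \<Rightarrow> ty \<Rightarrow> (sem \<times> sem) set" where
  "lrel Q Q' R TO = {(Base a, Base b) | a b. (a, b) \<in> R}"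
| "lrel Q Q' R (TArr A B) =
     {(g, h). g \<in> interp Q (TArr A B) \<and> h \<in> interp Q' (TArr A B) \<and>
              (\<forall>(x, y)\<in>lrel Q Q' R A. (app g x, app h y) \<in> lrel Q Q' R B)}"

text \<open>Partial surjection \<open>f : Q \<twoheadrightarrow> Q'\<close>: graph of a partial function from Q onto Q'.\<close>
definition psurj :: "nat set \<Rightarrow> nat set \<Rightarrow> (nat \<times> nat) set \<Rightarrow> bool" where
  "psurj Q Q' f \<longleftrightarrow> f \<subseteq> Q \<times> Q' \<and> single_valued f \<and> Range f = Q'"

text \<open>Profinite lambda-terms: families indexed by finite sets Q (finite subsets of nat,
  which represent all finite sets up to bijection); extensional outside finite sets.\<close>
definition Profin :: "ty \<Rightarrow> (nat set \<Rightarrow> sem) set" where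
  "Profin A = {\<theta>. (\<forall>Q. finite Q \<longrightarrow> \<theta> Q \<in> D Q A) \<and>
                  (\<forall>Q. \<not> finite Q \<longrightarrow> \<theta> Q = undefined) \<and>
                  (\<forall>Q Q' f. finite Q \<longrightarrow> finite Q' \<longrightarrow> psurj Q Q' f \<longrightarrow>
                       (\<theta> Q, \<theta> Q') \<in> lrel Q Q' f A)}"

definition profin_top :: "ty \<Rightarrow> (nat set \<Rightarrow> sem) topology" where
  "profin_top A = topology_generated_by
     {{\<theta> \<in> Profin A. \<theta> Q = q} | Q q. finite Q \<and> q \<in> D Q A}"

definition ultrafilter_on :: "'a set \<Rightarrow> 'a set set \<Rightarrow> 'a set set \<Rightarrow> bool" where
  "ultrafilter_on X B U \<longleftrightarrow> U \<subseteq> B \<and> X \<in> U \<and> {} \<notin> U \<and>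
     (\<forall>a\<in>U. \<forall>b\<in>B. a \<subseteq> b \<longrightarrow> b \<in> U) \<and>
     (\<forall>a\<in>U. \<forall>b\<in>U. a \<inter> b \<in> U) \<and>
     (\<forall>a\<in>B. a \<in> U \<or> X - a \<in> U)"

definition stone_space :: "'a set \<Rightarrow> 'a set set \<Rightarrow> 'a set set topology" where
  "stone_space X B = topology_generated_by
     {{U. ultrafilter_on X B U \<and> a \<in> U} | a. a \<in> B}"

end

theory Submission
  imports Defs
begin

(* Call a profinite term \<theta> a member of a regular language L recognised by F \<subseteq> [[A]]_Q
   when \<theta>_Q \<in> F. This does not depend on the recogniser: logical relations of partial
   surjections are again partial surjections, hence functional, so by the fundamental lemma
   \<theta> agrees with one actual term on any two finite sets Q, Q'. Membership therefore respects
   the Boolean operations, and \<theta> \<mapsto> {L. \<theta> member of L} maps the profinite terms onto the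
   ultrafilters of Reg(A), with inverse U \<mapsto> (Q \<mapsto> the unique q with [[-]]_Q^-1(q) \<in> U); both
   directions are continuous. The profinite terms form a closed subspace of the product of the
   finite discrete spaces D_Q(A), hence a compact space, so each clopen is a finite union of
   basic clopens {\<theta>. \<theta>_Q = q}, i.e. the set of members of a regular language. *)

section \<open>The finite semantics\<close>

lemma finite_interp: "finite Q \<Longrightarrow> finite (interp Q A)"
proof (induction A)
  case TO
  then show ?case by simp
next
  case (TArr A B)
  have "interp Q (TArr A B) \<subseteq> (\<lambda>g. Fn (Abs_fset g)) ` Pow (interp Q A \<times> interp Q B)"
  proof
    fix x assume "x \<in> interp Q (TArr A B)"
    then obtain g where "x = Fn g" "fset g \<subseteq> interp Q A \<times> interp Q B" by auto
    then show "x \<in> (\<lambda>g. Fn (Abs_fset g)) ` Pow (interp Q A \<times> interp Q B)"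
      by (intro image_eqI[of _ _ "fset g"]) (auto simp: fset_inverse)
  qed
  moreover have "finite (Pow (interp Q A \<times> interp Q B))"
    using TArr by simp
  ultimately show ?case
    by (meson finite_surj)
qed

definition tabulate :: "nat set \<Rightarrow> ty \<Rightarrow> (sem \<Rightarrow> sem) \<Rightarrow> sem" where
  "tabulate Q T \<phi> = Fn (Abs_fset ((\<lambda>x. (x, \<phi> x)) ` interp Q T))"

lemma eval_LAbs_tabulate: "eval Q \<rho> (LAbs T s) = tabulate Q T (\<lambda>x. eval Q (x # \<rho>) s)"
  by (simp add: tabulate_def)

lemma app_tabulate: "finite Q \<Longrightarrow> x \<in> interp Q T \<Longrightarrow> app (tabulate Q T \<phi>) x = \<phi> x"
  by (auto simp: tabulate_def Abs_fset_inverse finite_interp)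

lemma tabulate_in_interp:
  "finite Q \<Longrightarrow> (\<And>x. x \<in> interp Q T \<Longrightarrow> \<phi> x \<in> interp Q U) \<Longrightarrow>
   tabulate Q T \<phi> \<in> interp Q (TArr T U)"
  by (auto simp: tabulate_def Abs_fset_inverse finite_interp)

lemma fset_graph_app:
  assumes "Fn G \<in> interp Q (TArr T U)"
  shows "fset G = (\<lambda>x. (x, app (Fn G) x)) ` interp Q T"
proof -
  have G: "fset G \<subseteq> interp Q T \<times> interp Q U" "\<forall>x\<in>interp Q T. \<exists>!y. (x, y) \<in> fset G"
    using assms by auto
  have app: "app (Fn G) x = y" if "(x, y) \<in> fset G" for x y
  proof -
    have "\<exists>!y. (x, y) \<in> fset G"
      using G that by blast
    with that show ?thesis
      by (simp add: the1_equality)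
  qed
  show ?thesis
  proof
    show "fset G \<subseteq> (\<lambda>x. (x, app (Fn G) x)) ` interp Q T"
      using G(1) app by (auto simp: image_iff)
    show "(\<lambda>x. (x, app (Fn G) x)) ` interp Q T \<subseteq> fset G"
      using G(2) app by blast
  qed
qed

lemma app_in_interp:
  assumes g: "g \<in> interp Q (TArr T U)" and x: "x \<in> interp Q T"
  shows "app g x \<in> interp Q U"
proof -
  obtain G where G: "g = Fn G" "fset G \<subseteq> interp Q T \<times> interp Q U"
    using g by auto
  with g x fset_graph_app[of G Q T U] have "(x, app g x) \<in> fset G"
    by blast
  with G(2) show ?thesis
    by blast
qed

lemma interp_TArr_eqI:
  assumes "g \<in> interp Q (TArr T U)" "h \<in> interp Q (TArr T U)"
    and "\<And>x. x \<in> interp Q T \<Longrightarrow> app g x = app h x"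
  shows "g = h"
proof -
  obtain G H where GH: "g = Fn G" "h = Fn H"
    using assms(1,2) by auto
  have "fset G = (\<lambda>x. (x, app g x)) ` interp Q T"
    using fset_graph_app[of G] assms(1) GH(1) by blast
  also have "\<dots> = (\<lambda>x. (x, app h x)) ` interp Q T"
    using assms(3) by (simp cong: image_cong)
  also have "\<dots> = fset H"
    using fset_graph_app[of H] assms(2) GH(2) by blast
  finally have "fset G = fset H" .
  with GH show ?thesis
    by (simp add: fset_inject)
qed

lemma interp_nonempty: "finite Q \<Longrightarrow> Q \<noteq> {} \<Longrightarrow> interp Q A \<noteq> {}"
proof (induction A)
  case TO
  then show ?case by simp
next
  case (TArr A B)
  then obtain w where "w \<in> interp Q B" by blast
  then show ?case
    using tabulate_in_interp[OF TArr.prems(1), of A "\<lambda>_. w"] by blast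
qed

lemma eval_in_interp:
  "typing \<Gamma> M T \<Longrightarrow> finite Q \<Longrightarrow> length \<rho> = length \<Gamma> \<Longrightarrow>
   (\<forall>i<length \<Gamma>. \<rho> ! i \<in> interp Q (\<Gamma> ! i)) \<Longrightarrow> eval Q \<rho> M \<in> interp Q T"
proof (induction arbitrary: \<rho> rule: typing.induct)
  case (tvar i \<Gamma>)
  then show ?case by simp
next
  case (tapp \<Gamma> s T U t)
  then show ?case
    using app_in_interp by (metis eval.simps(2))
next
  case (tabs T \<Gamma> s U)
  show ?case
    unfolding eval_LAbs_tabulate
  proof (rule tabulate_in_interp[OF tabs.prems(1)])
    fix x assume "x \<in> interp Q T"
    with tabs.prems have "\<forall>i<length (T # \<Gamma>). (x # \<rho>) ! i \<in> interp Q ((T # \<Gamma>) ! i)"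
      by (auto simp: less_Suc_eq_0_disj)
    with tabs.IH tabs.prems show "eval Q (x # \<rho>) s \<in> interp Q U"
      by simp
  qed
qed

section \<open>Logical relations\<close>

lemma lrel_subset_interp: "f \<subseteq> Q \<times> Q' \<Longrightarrow> lrel Q Q' f A \<subseteq> interp Q A \<times> interp Q' A"
  by (cases A) auto

lemma lrel_eval:
  "typing \<Gamma> M T \<Longrightarrow> finite Q \<Longrightarrow> finite Q' \<Longrightarrow> f \<subseteq> Q \<times> Q' \<Longrightarrow>
   length \<rho> = length \<Gamma> \<Longrightarrow> length \<rho>' = length \<Gamma> \<Longrightarrow>
   (\<forall>i<length \<Gamma>. (\<rho> ! i, \<rho>' ! i) \<in> lrel Q Q' f (\<Gamma> ! i)) \<Longrightarrow>
   (eval Q \<rho> M, eval Q' \<rho>' M) \<in> lrel Q Q' f T"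
proof (induction arbitrary: \<rho> \<rho>' rule: typing.induct)
  case (tvar i \<Gamma>)
  then show ?case by simp
next
  case (tapp \<Gamma> s T U t)
  then have "(eval Q \<rho> s, eval Q' \<rho>' s) \<in> lrel Q Q' f (TArr T U)"
    "(eval Q \<rho> t, eval Q' \<rho>' t) \<in> lrel Q Q' f T" by blast+
  then show ?case by auto
next
  case (tabs T \<Gamma> s U)
  have ty: "typing \<Gamma> (LAbs T s) (TArr T U)"
    using tabs.hyps by (rule typing.tabs)
  have "\<forall>i<length \<Gamma>. \<rho> ! i \<in> interp Q (\<Gamma> ! i)" "\<forall>i<length \<Gamma>. \<rho>' ! i \<in> interp Q' (\<Gamma> ! i)"
    using tabs.prems(6) lrel_subset_interp[OF tabs.prems(3)] by blast+
  then have in_interp: "eval Q \<rho> (LAbs T s) \<in> interp Q (TArr T U)"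
    "eval Q' \<rho>' (LAbs T s) \<in> interp Q' (TArr T U)"
    using eval_in_interp[OF ty] tabs.prems by auto
  have "(app (eval Q \<rho> (LAbs T s)) x, app (eval Q' \<rho>' (LAbs T s)) y) \<in> lrel Q Q' f U"
    if xy: "(x, y) \<in> lrel Q Q' f T" for x y
  proof -
    have "x \<in> interp Q T" "y \<in> interp Q' T"
      using lrel_subset_interp[OF tabs.prems(3)] xy by auto
    moreover have "\<forall>i<length (T # \<Gamma>). ((x # \<rho>) ! i, (y # \<rho>') ! i) \<in> lrel Q Q' f ((T # \<Gamma>) ! i)"
      using xy tabs.prems(6) by (auto simp: less_Suc_eq_0_disj)
    then have "(eval Q (x # \<rho>) s, eval Q' (y # \<rho>') s) \<in> lrel Q Q' f U"
      using tabs.IH tabs.prems by simp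
    ultimately show ?thesis
      unfolding eval_LAbs_tabulate using app_tabulate tabs.prems(1,2) by simp
  qed
  with in_interp show ?case
    by auto
qed

lemma single_valued_lrel_TArr:
  assumes "Range (lrel Q Q' f A) = interp Q' A" and svB: "single_valued (lrel Q Q' f B)"
  shows "single_valued (lrel Q Q' f (TArr A B))"
proof (rule single_valuedI)
  fix g h h' assume gh: "(g, h) \<in> lrel Q Q' f (TArr A B)" and gh': "(g, h') \<in> lrel Q Q' f (TArr A B)"
  show "h = h'"
  proof (rule interp_TArr_eqI)
    show "h \<in> interp Q' (TArr A B)" "h' \<in> interp Q' (TArr A B)"
      using gh gh' by auto
    fix y assume "y \<in> interp Q' A"
    then obtain x where "(x, y) \<in> lrel Q Q' f A"
      using assms(1) by blast
    then have "(app g x, app h y) \<in> lrel Q Q' f B" "(app g x, app h' y) \<in> lrel Q Q' f B"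
      using gh gh' by auto
    then show "app h y = app h' y"
      using svB by (auto dest: single_valuedD)
  qed
qed

lemma lrel_TArr_tabulate:
  assumes "finite Q" "f \<subseteq> Q \<times> Q'" "h \<in> interp Q' (TArr A B)"
    and \<phi>: "\<forall>x\<in>interp Q A. \<phi> x \<in> interp Q B \<and>
      (\<forall>y. (x, y) \<in> lrel Q Q' f A \<longrightarrow> (\<phi> x, app h y) \<in> lrel Q Q' f B)"
  shows "(tabulate Q A \<phi>, h) \<in> lrel Q Q' f (TArr A B)"
proof -
  have "tabulate Q A \<phi> \<in> interp Q (TArr A B)"
    using tabulate_in_interp[OF \<open>finite Q\<close>] \<phi> by blast
  moreover have "(app (tabulate Q A \<phi>) x, app h y) \<in> lrel Q Q' f B"
    if xy: "(x, y) \<in> lrel Q Q' f A" for x y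
  proof -
    have "x \<in> interp Q A"
      using xy lrel_subset_interp[OF \<open>f \<subseteq> Q \<times> Q'\<close>] by blast
    with xy show ?thesis
      using \<phi> app_tabulate[OF \<open>finite Q\<close>] by simp
  qed
  ultimately show ?thesis
    using \<open>h \<in> interp Q' (TArr A B)\<close> by auto
qed

lemma lrel_TArr_pointwise:
  assumes f: "psurj Q Q' f" and "finite Q"
    and svA: "single_valued (lrel Q Q' f A)" and rangeB: "Range (lrel Q Q' f B) = interp Q' B"
    and h: "h \<in> interp Q' (TArr A B)" and x: "x \<in> interp Q A"
  shows "\<exists>z. z \<in> interp Q B \<and> (\<forall>y. (x, y) \<in> lrel Q Q' f A \<longrightarrow> (z, app h y) \<in> lrel Q Q' f B)"
proof (cases "x \<in> Domain (lrel Q Q' f A)")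
  case True
  have sub: "f \<subseteq> Q \<times> Q'"
    using f by (simp add: psurj_def)
  from True obtain y where xy: "(x, y) \<in> lrel Q Q' f A" by blast
  then have "app h y \<in> interp Q' B"
    using app_in_interp h lrel_subset_interp[OF sub] by blast
  then obtain z where "(z, app h y) \<in> lrel Q Q' f B"
    using rangeB by blast
  moreover from this have "z \<in> interp Q B"
    using lrel_subset_interp[OF sub] by blast
  ultimately show ?thesis
    using xy svA by (auto dest: single_valuedD)
next
  case False
  \<comment> \<open>any value will do; if \<open>Q = {}\<close> then also \<open>Q' = {}\<close>, and \<open>h\<close> supplies one\<close>
  have "interp Q B \<noteq> {}"
  proof (cases "Q = {}")
    case True
    with f have "Q' = Q"
      by (auto simp: psurj_def)
    then show ?thesis
      using app_in_interp h x by blast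
  qed (use interp_nonempty \<open>finite Q\<close> in blast)
  with False show ?thesis
    by blast
qed

lemma Range_lrel_TArr:
  assumes f: "psurj Q Q' f" and "finite Q"
    and svA: "single_valued (lrel Q Q' f A)" and rangeB: "Range (lrel Q Q' f B) = interp Q' B"
  shows "Range (lrel Q Q' f (TArr A B)) = interp Q' (TArr A B)"
proof -
  have sub: "f \<subseteq> Q \<times> Q'"
    using f by (simp add: psurj_def)
  have "h \<in> Range (lrel Q Q' f (TArr A B))" if h: "h \<in> interp Q' (TArr A B)" for h
  proof -
    from bchoice[OF ballI[OF lrel_TArr_pointwise[OF assms h]]]
    obtain \<phi> where "\<forall>x\<in>interp Q A. \<phi> x \<in> interp Q B \<and>
        (\<forall>y. (x, y) \<in> lrel Q Q' f A \<longrightarrow> (\<phi> x, app h y) \<in> lrel Q Q' f B)" ..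
    then show ?thesis
      using lrel_TArr_tabulate[OF \<open>finite Q\<close> sub h] by blast
  qed
  then show ?thesis
    using lrel_subset_interp[OF sub] by blast
qed

lemma lrel_partial_surjection:
  assumes f: "psurj Q Q' f" and "finite Q"
  shows "single_valued (lrel Q Q' f A) \<and> Range (lrel Q Q' f A) = interp Q' A"
proof (induction A)
  case TO
  with f show ?case
    by (auto simp: psurj_def single_valued_def)
next
  case (TArr A B)
  then show ?case
    using single_valued_lrel_TArr Range_lrel_TArr[OF assms] by blast
qed

lemma psurj_Id_on: "Q1 \<subseteq> Q \<Longrightarrow> psurj Q Q1 (Id_on Q1)"
  unfolding psurj_def single_valued_def by auto

lemma single_valued_lrel_Id_on:
  "finite Q \<Longrightarrow> Q1 \<subseteq> Q \<Longrightarrow> single_valued (lrel Q Q1 (Id_on Q1) A)"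
  using lrel_partial_surjection[OF psurj_Id_on] by blast

lemma typing_some_in_Lam: "c \<in> Lam A \<Longrightarrow> typing [] (SOME M. M \<in> c) A"
proof -
  assume "c \<in> Lam A"
  then obtain M where M: "M \<in> Terms A" and c: "c = conv A `` {M}"
    unfolding Lam_def by (auto elim: quotientE)
  define r where "r = {(M, N). M \<in> Terms A \<and> N \<in> Terms A \<and> be_step M N}"
  have conv: "conv A = (r \<union> r\<inverse>)\<^sup>*"
    unfolding conv_def r_def Let_def by simp
  have "N \<in> Terms A" if "(M, N) \<in> (r \<union> r\<inverse>)\<^sup>*" for N
    using that by (induction rule: rtrancl_induct) (auto simp: M r_def)
  then have "c \<subseteq> Terms A" "M \<in> c"
    unfolding c conv by auto
  then show ?thesis
    unfolding Terms_def by (metis mem_Collect_eq someI subsetD)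
qed

lemma den_in_interp: "finite Q \<Longrightarrow> c \<in> Lam A \<Longrightarrow> den Q c \<in> interp Q A"
  unfolding den_def by (rule eval_in_interp[OF typing_some_in_Lam]) auto

lemma den_lrel:
  "finite Q \<Longrightarrow> finite Q' \<Longrightarrow> f \<subseteq> Q \<times> Q' \<Longrightarrow> c \<in> Lam A \<Longrightarrow>
   (den Q c, den Q' c) \<in> lrel Q Q' f A"
  unfolding den_def by (rule lrel_eval[OF typing_some_in_Lam]) auto

lemma D_subset_interp: "finite Q \<Longrightarrow> D Q A \<subseteq> interp Q A"
  unfolding D_def using den_in_interp by blast

lemma den_restrict_unique:
  assumes "finite Q" "Q1 \<subseteq> Q" "c \<in> Lam A" "(den Q c, y) \<in> lrel Q Q1 (Id_on Q1) A"
  shows "y = den Q1 c"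
proof -
  have "(den Q c, den Q1 c) \<in> lrel Q Q1 (Id_on Q1) A"
    using assms finite_subset by (intro den_lrel) auto
  with assms(4) show ?thesis
    using single_valuedD[OF single_valued_lrel_Id_on[OF assms(1,2)]] by blast
qed

section \<open>Regular languages\<close>

definition recognizes :: "ty \<Rightarrow> nat set \<Rightarrow> sem set \<Rightarrow> lterm set set \<Rightarrow> bool" where
  "recognizes A Q F a \<longleftrightarrow> finite Q \<and> a = {c \<in> Lam A. den Q c \<in> F}"

lemma Reg_iff_recognizes: "a \<in> Reg A \<longleftrightarrow> (\<exists>Q F. recognizes A Q F a)"
proof
  assume "\<exists>Q F. recognizes A Q F a"
  then obtain Q F where "finite Q" "a = {c \<in> Lam A. den Q c \<in> F}"
    by (auto simp: recognizes_def)
  moreover from this have "a = {c \<in> Lam A. den Q c \<in> F \<inter> interp Q A}"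
    using den_in_interp by blast
  ultimately show "a \<in> Reg A"
    unfolding Reg_def Reg_Q_def by blast
qed (auto simp: Reg_def Reg_Q_def recognizes_def)

lemma recognizes_finite: "recognizes A Q F a \<Longrightarrow> finite Q"
  by (simp add: recognizes_def)

lemma recognizes_Reg: "recognizes A Q F a \<Longrightarrow> a \<in> Reg A"
  using Reg_iff_recognizes by blast

lemma recognizes_subset_Lam: "recognizes A Q F a \<Longrightarrow> a \<subseteq> Lam A"
  by (auto simp: recognizes_def)

lemma recognizes_Int: "recognizes A Q F a \<Longrightarrow> recognizes A Q G b \<Longrightarrow> recognizes A Q (F \<inter> G) (a \<inter> b)"
  by (auto simp: recognizes_def)

lemma recognizes_Un: "recognizes A Q F a \<Longrightarrow> recognizes A Q G b \<Longrightarrow> recognizes A Q (F \<union> G) (a \<union> b)"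
  by (auto simp: recognizes_def)

lemma recognizes_Diff: "recognizes A Q F a \<Longrightarrow> recognizes A Q (- F) (Lam A - a)"
  by (auto simp: recognizes_def)

lemma recognizes_empty: "recognizes A {} {} {}"
  by (simp add: recognizes_def)

definition den_fiber :: "ty \<Rightarrow> nat set \<Rightarrow> sem \<Rightarrow> lterm set set" where
  "den_fiber A Q q = {c \<in> Lam A. den Q c = q}"

lemma recognizes_den_fiber: "finite Q \<Longrightarrow> recognizes A Q {q} (den_fiber A Q q)"
  by (simp add: recognizes_def den_fiber_def)

lemma recognizes_superset:
  assumes a: "recognizes A Q1 F a" and "Q1 \<subseteq> Q" "finite Q"
  shows "recognizes A Q {x. \<exists>y\<in>F. (x, y) \<in> lrel Q Q1 (Id_on Q1) A} a"
proof -
  have "den Q1 c \<in> F \<longleftrightarrow> (\<exists>y\<in>F. (den Q c, y) \<in> lrel Q Q1 (Id_on Q1) A)" if c: "c \<in> Lam A" for c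
  proof
    have "finite Q1" "Id_on Q1 \<subseteq> Q \<times> Q1"
      using assms finite_subset by auto
    with assms c show "den Q1 c \<in> F \<Longrightarrow> \<exists>y\<in>F. (den Q c, y) \<in> lrel Q Q1 (Id_on Q1) A"
      using den_lrel by blast
    show "\<exists>y\<in>F. (den Q c, y) \<in> lrel Q Q1 (Id_on Q1) A \<Longrightarrow> den Q1 c \<in> F"
      using den_restrict_unique assms c by blast
  qed
  with assms show ?thesis
    by (auto simp: recognizes_def)
qed

lemma Reg_common_recognizer:
  assumes "a \<in> Reg A" "b \<in> Reg A"
  obtains Q F G where "recognizes A Q F a" "recognizes A Q G b"
proof -
  obtain Q1 F1 Q2 F2 where a: "recognizes A Q1 F1 a" and b: "recognizes A Q2 F2 b"
    using assms Reg_iff_recognizes by blast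
  then have fin: "finite (Q1 \<union> Q2)"
    by (simp add: recognizes_finite)
  show ?thesis
    using that[OF recognizes_superset[OF a _ fin] recognizes_superset[OF b _ fin]] by blast
qed

lemma Reg_Int:
  assumes "a \<in> Reg A" "b \<in> Reg A"
  shows "a \<inter> b \<in> Reg A"
proof -
  obtain Q F G where "recognizes A Q F a" "recognizes A Q G b"
    using Reg_common_recognizer[OF assms] .
  then show ?thesis
    by (rule recognizes_Reg[OF recognizes_Int])
qed

lemma Reg_Un:
  assumes "a \<in> Reg A" "b \<in> Reg A"
  shows "a \<union> b \<in> Reg A"
proof -
  obtain Q F G where "recognizes A Q F a" "recognizes A Q G b"
    using Reg_common_recognizer[OF assms] .
  then show ?thesis
    by (rule recognizes_Reg[OF recognizes_Un])
qed

lemma Reg_Diff: "a \<in> Reg A \<Longrightarrow> Lam A - a \<in> Reg A"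
  unfolding Reg_iff_recognizes using recognizes_Diff by blast

section \<open>Profinite terms\<close>

lemma Profin_in_D: "\<theta> \<in> Profin A \<Longrightarrow> finite Q \<Longrightarrow> \<theta> Q \<in> D Q A"
  by (simp add: Profin_def)

lemma Profin_lrel:
  "\<theta> \<in> Profin A \<Longrightarrow> finite Q \<Longrightarrow> finite Q' \<Longrightarrow> psurj Q Q' f \<Longrightarrow> (\<theta> Q, \<theta> Q') \<in> lrel Q Q' f A"
  by (simp add: Profin_def)

lemma Profin_restrict:
  assumes \<theta>: "\<theta> \<in> Profin A" and "finite Q" "Q1 \<subseteq> Q" "c \<in> Lam A" "\<theta> Q = den Q c"
  shows "\<theta> Q1 = den Q1 c"
  using assms den_restrict_unique Profin_lrel[OF \<theta> _ _ psurj_Id_on] finite_subset by metis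

lemma Profin_agrees_with_term:
  assumes \<theta>: "\<theta> \<in> Profin A" and "finite Q1" "finite Q2"
  obtains c where "c \<in> Lam A" "\<theta> Q1 = den Q1 c" "\<theta> Q2 = den Q2 c"
proof -
  have "finite (Q1 \<union> Q2)"
    using assms by simp
  then obtain c where "c \<in> Lam A" "\<theta> (Q1 \<union> Q2) = den (Q1 \<union> Q2) c"
    using Profin_in_D[OF \<theta>] unfolding D_def by blast
  with that show ?thesis
    using Profin_restrict[OF \<theta> \<open>finite (Q1 \<union> Q2)\<close>] by blast
qed

definition profin_lang :: "ty \<Rightarrow> lterm set set \<Rightarrow> (nat set \<Rightarrow> sem) set" where
  "profin_lang A a = {\<theta> \<in> Profin A. \<exists>Q F. recognizes A Q F a \<and> \<theta> Q \<in> F}"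

lemma profin_lang_recognizes:
  assumes a: "recognizes A Q F a"
  shows "profin_lang A a = {\<theta> \<in> Profin A. \<theta> Q \<in> F}"
proof -
  have "\<theta> Q \<in> F" if \<theta>: "\<theta> \<in> Profin A" and a': "recognizes A Q' F' a" "\<theta> Q' \<in> F'" for \<theta> Q' F'
  proof -
    obtain c where c: "c \<in> Lam A" "\<theta> Q = den Q c" "\<theta> Q' = den Q' c"
      using Profin_agrees_with_term[OF \<theta>] a a'(1) recognizes_finite by metis
    with a' have "c \<in> a"
      by (simp add: recognizes_def)
    with a c show "\<theta> Q \<in> F"
      by (simp add: recognizes_def)
  qed
  with a show ?thesis
    unfolding profin_lang_def by blast
qed

lemma profin_lang_subset_Profin: "profin_lang A a \<subseteq> Profin A"
  by (auto simp: profin_lang_def)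

lemma profin_lang_Int:
  assumes "a \<in> Reg A" "b \<in> Reg A"
  shows "profin_lang A (a \<inter> b) = profin_lang A a \<inter> profin_lang A b"
proof -
  obtain Q F G where "recognizes A Q F a" "recognizes A Q G b"
    using Reg_common_recognizer[OF assms] .
  then show ?thesis
    using profin_lang_recognizes recognizes_Int by blast
qed

lemma profin_lang_Un:
  assumes "a \<in> Reg A" "b \<in> Reg A"
  shows "profin_lang A (a \<union> b) = profin_lang A a \<union> profin_lang A b"
proof -
  obtain Q F G where "recognizes A Q F a" "recognizes A Q G b"
    using Reg_common_recognizer[OF assms] .
  then show ?thesis
    using profin_lang_recognizes recognizes_Un by blast
qed

lemma profin_lang_Diff:
  assumes "a \<in> Reg A"
  shows "profin_lang A (Lam A - a) = Profin A - profin_lang A a"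
proof -
  obtain Q F where "recognizes A Q F a"
    using assms Reg_iff_recognizes by blast
  then show ?thesis
    using profin_lang_recognizes recognizes_Diff by blast
qed

lemma profin_lang_empty: "profin_lang A {} = {}"
  using profin_lang_recognizes[OF recognizes_empty] by simp

lemma profin_lang_den_fiber:
  "finite Q \<Longrightarrow> profin_lang A (den_fiber A Q q) = {\<theta> \<in> Profin A. \<theta> Q = q}"
  using profin_lang_recognizes[OF recognizes_den_fiber] by simp

definition profin_of_term :: "lterm set \<Rightarrow> nat set \<Rightarrow> sem" where
  "profin_of_term c = (\<lambda>Q. if finite Q then den Q c else undefined)"

lemma profin_of_term_in_Profin: "c \<in> Lam A \<Longrightarrow> profin_of_term c \<in> Profin A"
  by (auto simp: Profin_def profin_of_term_def D_def psurj_def intro: den_lrel)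

lemma profin_of_term_in_profin_lang:
  assumes "c \<in> Lam A" "a \<in> Reg A"
  shows "profin_of_term c \<in> profin_lang A a \<longleftrightarrow> c \<in> a"
proof -
  obtain Q F where "recognizes A Q F a"
    using assms Reg_iff_recognizes by blast
  with assms show ?thesis
    using profin_lang_recognizes profin_of_term_in_Profin
    by (auto simp: recognizes_def profin_of_term_def)
qed

lemma inj_on_profin_lang: "inj_on (profin_lang A) (Reg A)"
proof (rule inj_onI)
  fix a b assume a: "a \<in> Reg A" and b: "b \<in> Reg A" and eq: "profin_lang A a = profin_lang A b"
  have "a \<subseteq> Lam A" "b \<subseteq> Lam A"
    using a b Reg_iff_recognizes recognizes_subset_Lam by metis+
  with a b eq show "a = b"
    using profin_of_term_in_profin_lang by blast
qed

section \<open>Profinite terms as ultrafilters of regular languages\<close>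

lemma
  assumes "ultrafilter_on X B U"
  shows ultrafilter_on_subset: "U \<subseteq> B"
    and ultrafilter_on_top: "X \<in> U"
    and ultrafilter_on_not_empty: "{} \<notin> U"
    and ultrafilter_on_mono: "a \<in> U \<Longrightarrow> b \<in> B \<Longrightarrow> a \<subseteq> b \<Longrightarrow> b \<in> U"
    and ultrafilter_on_Int: "a \<in> U \<Longrightarrow> b \<in> U \<Longrightarrow> a \<inter> b \<in> U"
    and ultrafilter_on_Diff: "a \<in> B \<Longrightarrow> a \<notin> U \<Longrightarrow> X - a \<in> U"
  using assms unfolding ultrafilter_on_def by (simp_all only: Ball_def) blast+

lemma ultrafilter_on_Int_nonempty: "ultrafilter_on X B U \<Longrightarrow> a \<in> U \<Longrightarrow> b \<in> U \<Longrightarrow> a \<inter> b \<noteq> {}"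
  using ultrafilter_on_Int ultrafilter_on_not_empty by metis

lemma ultrafilter_on_Un:
  assumes U: "ultrafilter_on X B U" and "a \<in> B" "b \<in> B" "a \<union> b \<in> U"
  shows "a \<in> U \<or> b \<in> U"
proof (rule disjCI)
  assume "b \<notin> U"
  with assms have "(X - b) \<inter> (a \<union> b) \<in> U"
    using ultrafilter_on_Int ultrafilter_on_Diff by blast
  moreover have "(X - b) \<inter> (a \<union> b) \<subseteq> a"
    by blast
  ultimately show "a \<in> U"
    using ultrafilter_on_mono[OF U] \<open>a \<in> B\<close> by blast
qed

lemma ultrafilter_on_UNION:
  assumes U: "ultrafilter_on X B U" and "finite I"
    and B: "\<And>J. J \<subseteq> I \<Longrightarrow> (\<Union>i\<in>J. a i) \<in> B"
    and "(\<Union>i\<in>I. a i) \<in> U"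
  shows "\<exists>i\<in>I. a i \<in> U"
  using \<open>finite I\<close> B \<open>(\<Union>i\<in>I. a i) \<in> U\<close>
proof (induction I rule: finite_induct)
  case empty
  then show ?case
    using ultrafilter_on_not_empty[OF U] by simp
next
  case (insert i I)
  have "a i \<in> B" "(\<Union>i\<in>I. a i) \<in> B"
    using insert.prems(1)[of "{i}"] insert.prems(1)[of I] by auto
  with insert.prems(2) have "a i \<in> U \<or> (\<Union>i\<in>I. a i) \<in> U"
    using ultrafilter_on_Un[OF U] by simp
  with insert.IH insert.prems(1) show ?case
    by blast
qed

definition uf_to_profin :: "ty \<Rightarrow> lterm set set set \<Rightarrow> nat set \<Rightarrow> sem" where
  "uf_to_profin A U Q = (if finite Q then THE q. den_fiber A Q q \<in> U else undefined)"

lemma den_fiber_uf_to_profin: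
  assumes U: "ultrafilter_on (Lam A) (Reg A) U" and "finite Q"
  shows "den_fiber A Q (uf_to_profin A U Q) \<in> U"
proof -
  have fibers: "(\<Union>q\<in>J. den_fiber A Q q) = {c \<in> Lam A. den Q c \<in> J}" for J
    by (auto simp: den_fiber_def)
  have "(\<Union>q\<in>J. den_fiber A Q q) \<in> Reg A" for J
    unfolding fibers using \<open>finite Q\<close> by (intro recognizes_Reg) (simp add: recognizes_def)
  moreover have "(\<Union>q\<in>interp Q A. den_fiber A Q q) \<in> U"
    unfolding fibers using den_in_interp[OF \<open>finite Q\<close>] ultrafilter_on_top[OF U]
    by (simp add: Collect_conj_eq Int_absorb2 subsetI)
  ultimately obtain q where q: "den_fiber A Q q \<in> U"
    using ultrafilter_on_UNION[OF U finite_interp[OF \<open>finite Q\<close>]] by blast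
  have "q' = q" if "den_fiber A Q q' \<in> U" for q'
    using ultrafilter_on_Int_nonempty[OF U q that] by (auto simp: den_fiber_def)
  with q \<open>finite Q\<close> show ?thesis
    unfolding uf_to_profin_def by (auto intro: theI)
qed

lemma uf_to_profin_recognizes:
  assumes U: "ultrafilter_on (Lam A) (Reg A) U" and a: "recognizes A Q F a"
  shows "a \<in> U \<longleftrightarrow> uf_to_profin A U Q \<in> F"
proof -
  let ?q = "uf_to_profin A U Q"
  have q: "den_fiber A Q ?q \<in> U"
    using den_fiber_uf_to_profin[OF U recognizes_finite[OF a]] .
  show ?thesis
  proof
    assume "a \<in> U"
    then obtain c where "c \<in> a" "c \<in> den_fiber A Q ?q"
      using ultrafilter_on_Int_nonempty[OF U _ q] by blast
    with a show "?q \<in> F"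
      by (auto simp: recognizes_def den_fiber_def)
  next
    assume "?q \<in> F"
    with a have "den_fiber A Q ?q \<subseteq> a"
      by (auto simp: recognizes_def den_fiber_def)
    with q show "a \<in> U"
      using ultrafilter_on_mono[OF U] recognizes_Reg[OF a] by blast
  qed
qed

lemma uf_to_profin_in_Profin:
  assumes U: "ultrafilter_on (Lam A) (Reg A) U"
  shows "uf_to_profin A U \<in> Profin A"
  unfolding Profin_def
proof (intro CollectI conjI allI impI)
  fix Q :: "nat set" assume "finite Q"
  then have "den_fiber A Q (uf_to_profin A U Q) \<noteq> {}"
    using den_fiber_uf_to_profin[OF U] ultrafilter_on_not_empty[OF U] by force
  then obtain c where "c \<in> Lam A" "uf_to_profin A U Q = den Q c"
    unfolding den_fiber_def by force
  then show "uf_to_profin A U Q \<in> D Q A"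
    unfolding D_def by simp
next
  fix Q :: "nat set" assume "infinite Q"
  then show "uf_to_profin A U Q = undefined"
    by (simp add: uf_to_profin_def)
next
  fix Q Q' f assume fin: "finite Q" "finite Q'" and f: "psurj Q Q' f"
  have "den_fiber A Q (uf_to_profin A U Q) \<inter> den_fiber A Q' (uf_to_profin A U Q') \<noteq> {}"
    using ultrafilter_on_Int_nonempty[OF U] den_fiber_uf_to_profin[OF U] fin by simp
  then obtain c where "c \<in> Lam A" "den Q c = uf_to_profin A U Q" "den Q' c = uf_to_profin A U Q'"
    unfolding den_fiber_def by blast
  moreover have "f \<subseteq> Q \<times> Q'"
    using f by (simp add: psurj_def)
  ultimately show "(uf_to_profin A U Q, uf_to_profin A U Q') \<in> lrel Q Q' f A"
    using den_lrel[OF fin] by metis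
qed

definition profin_to_uf :: "ty \<Rightarrow> (nat set \<Rightarrow> sem) \<Rightarrow> lterm set set set" where
  "profin_to_uf A \<theta> = {a \<in> Reg A. \<theta> \<in> profin_lang A a}"

lemma ultrafilter_profin_to_uf:
  assumes \<theta>: "\<theta> \<in> Profin A"
  shows "ultrafilter_on (Lam A) (Reg A) (profin_to_uf A \<theta>)"
  unfolding ultrafilter_on_def
proof (intro conjI ballI impI)
  have "{} \<in> Reg A"
    using recognizes_Reg[OF recognizes_empty] .
  then show "Lam A \<in> profin_to_uf A \<theta>"
    using \<theta> Reg_Diff[of "{}"] profin_lang_Diff[of "{}"] profin_lang_empty
    by (simp add: profin_to_uf_def)
next
  fix a b assume "a \<in> profin_to_uf A \<theta>" "b \<in> Reg A" "a \<subseteq> b"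
  then show "b \<in> profin_to_uf A \<theta>"
    using profin_lang_Int[of a A b] by (auto simp: profin_to_uf_def Int_absorb2)
next
  fix a b assume "a \<in> profin_to_uf A \<theta>" "b \<in> profin_to_uf A \<theta>"
  then show "a \<inter> b \<in> profin_to_uf A \<theta>"
    using Reg_Int profin_lang_Int by (auto simp: profin_to_uf_def)
next
  fix a assume "a \<in> Reg A"
  then show "a \<in> profin_to_uf A \<theta> \<or> Lam A - a \<in> profin_to_uf A \<theta>"
    using \<theta> Reg_Diff profin_lang_Diff by (auto simp: profin_to_uf_def)
qed (auto simp: profin_to_uf_def profin_lang_empty)

lemma uf_to_profin_inverse:
  assumes U: "ultrafilter_on (Lam A) (Reg A) U"
  shows "profin_to_uf A (uf_to_profin A U) = U"
proof -
  have "a \<in> U \<longleftrightarrow> uf_to_profin A U \<in> profin_lang A a" if "a \<in> Reg A" for a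
  proof -
    obtain Q F where "recognizes A Q F a"
      using \<open>a \<in> Reg A\<close> Reg_iff_recognizes by blast
    then show ?thesis
      using uf_to_profin_recognizes[OF U] profin_lang_recognizes uf_to_profin_in_Profin[OF U] by blast
  qed
  with ultrafilter_on_subset[OF U] show ?thesis
    unfolding profin_to_uf_def by blast
qed

lemma profin_to_uf_inverse:
  assumes \<theta>: "\<theta> \<in> Profin A"
  shows "uf_to_profin A (profin_to_uf A \<theta>) = \<theta>"
proof
  fix Q :: "nat set"
  show "uf_to_profin A (profin_to_uf A \<theta>) Q = \<theta> Q"
  proof (cases "finite Q")
    case True
    then have "den_fiber A Q q \<in> profin_to_uf A \<theta> \<longleftrightarrow> q = \<theta> Q" for q
      using \<theta> recognizes_Reg[OF recognizes_den_fiber] profin_lang_den_fiber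
      by (auto simp: profin_to_uf_def)
    with True show ?thesis
      by (simp add: uf_to_profin_def)
  next
    case False
    with \<theta> show ?thesis
      by (simp add: uf_to_profin_def Profin_def)
  qed
qed

lemma topspace_stone_space: "topspace (stone_space X B) = {U. ultrafilter_on X B U}"
  unfolding stone_space_def topology_generated_by_topspace
proof (intro equalityI subsetI)
  fix U assume "U \<in> {U. ultrafilter_on X B U}"
  then have "ultrafilter_on X B U" "X \<in> B" "X \<in> U"
    using ultrafilter_on_top ultrafilter_on_subset by blast+
  then show "U \<in> \<Union> {{U. ultrafilter_on X B U \<and> a \<in> U} | a. a \<in> B}"
    by blast
qed blast

lemma openin_stone_space: "a \<in> B \<Longrightarrow> openin (stone_space X B) {U. ultrafilter_on X B U \<and> a \<in> U}"
  unfolding stone_space_def by (rule topology_generated_by_Basis) blast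

lemma continuous_map_stone_space:
  assumes uf: "\<And>x. x \<in> topspace T \<Longrightarrow> ultrafilter_on X B (f x)"
    and opn: "\<And>a. a \<in> B \<Longrightarrow> openin T {x \<in> topspace T. a \<in> f x}"
  shows "continuous_map T (stone_space X B) f"
  unfolding stone_space_def
proof (rule continuous_on_generated_topo)
  fix V assume "V \<in> {{U. ultrafilter_on X B U \<and> a \<in> U} | a. a \<in> B}"
  then obtain a where "a \<in> B" and V: "V = {U. ultrafilter_on X B U \<and> a \<in> U}"
    by blast
  then have "f -` V \<inter> topspace T = {x \<in> topspace T. a \<in> f x}"
    using uf by auto
  with opn[OF \<open>a \<in> B\<close>] show "openin T (f -` V \<inter> topspace T)"
    by simp
next
  show "f ` topspace T \<subseteq> \<Union> {{U. ultrafilter_on X B U \<and> a \<in> U} | a. a \<in> B}"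
    using uf topspace_stone_space[of X B] unfolding stone_space_def by auto
qed

lemma topspace_profin_top: "topspace (profin_top A) = Profin A"
  unfolding profin_top_def topology_generated_by_topspace
  using Profin_in_D[of _ A "{}"] by blast

lemma openin_profin_top: "finite Q \<Longrightarrow> openin (profin_top A) {\<theta> \<in> Profin A. \<theta> Q \<in> F}"
proof -
  assume "finite Q"
  then have "{\<theta> \<in> Profin A. \<theta> Q \<in> F} = (\<Union>q\<in>F \<inter> D Q A. {\<theta> \<in> Profin A. \<theta> Q = q})"
    using Profin_in_D by blast
  moreover have "openin (profin_top A) {\<theta> \<in> Profin A. \<theta> Q = q}" if "q \<in> D Q A" for q
    unfolding profin_top_def using \<open>finite Q\<close> that by (intro topology_generated_by_Basis) blast
  then have "openin (profin_top A) (\<Union>q\<in>F \<inter> D Q A. {\<theta> \<in> Profin A. \<theta> Q = q})"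
    by (intro openin_Union) blast
  ultimately show ?thesis
    by simp
qed

lemma continuous_map_profin_top:
  assumes "\<And>x. x \<in> topspace X \<Longrightarrow> f x \<in> Profin A"
    and "\<And>Q q. finite Q \<Longrightarrow> openin X {x \<in> topspace X. f x Q = q}"
  shows "continuous_map X (profin_top A) f"
  unfolding profin_top_def
proof (rule continuous_on_generated_topo)
  fix V assume "V \<in> {{\<theta> \<in> Profin A. \<theta> Q = q} | Q q. finite Q \<and> q \<in> D Q A}"
  then obtain Q q where "finite Q" "V = {\<theta> \<in> Profin A. \<theta> Q = q}"
    by blast
  moreover from this have "f -` V \<inter> topspace X = {x \<in> topspace X. f x Q = q}"
    using assms(1) by auto
  ultimately show "openin X (f -` V \<inter> topspace X)"
    using assms(2) by simp
next
  show "f ` topspace X \<subseteq> \<Union> {{\<theta> \<in> Profin A. \<theta> Q = q} | Q q. finite Q \<and> q \<in> D Q A}"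
    using assms(1) topspace_profin_top[of A] unfolding profin_top_def by auto
qed

lemma clopen_profin_lang:
  assumes "a \<in> Reg A"
  shows "openin (profin_top A) (profin_lang A a) \<and> closedin (profin_top A) (profin_lang A a)"
proof -
  have opn: "openin (profin_top A) (profin_lang A b)" if b: "b \<in> Reg A" for b
  proof -
    obtain Q F where "recognizes A Q F b"
      using b Reg_iff_recognizes by blast
    then show ?thesis
      using profin_lang_recognizes openin_profin_top recognizes_finite by simp
  qed
  have "topspace (profin_top A) - profin_lang A a = profin_lang A (Lam A - a)"
    using profin_lang_Diff[OF assms] by (simp add: topspace_profin_top)
  then show ?thesis
    unfolding closedin_def using opn assms Reg_Diff openin_subset by metis
qed

lemma profin_top_homeomorphic_stone_space:
  "profin_top A homeomorphic_space stone_space (Lam A) (Reg A)"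
  unfolding homeomorphic_space_def homeomorphic_maps_def
proof (intro exI conjI ballI)
  show "continuous_map (profin_top A) (stone_space (Lam A) (Reg A)) (profin_to_uf A)"
  proof (rule continuous_map_stone_space)
    fix a assume "a \<in> Reg A"
    then have "{\<theta> \<in> topspace (profin_top A). a \<in> profin_to_uf A \<theta>} = profin_lang A a"
      using profin_lang_subset_Profin by (auto simp: topspace_profin_top profin_to_uf_def)
    with clopen_profin_lang[OF \<open>a \<in> Reg A\<close>]
    show "openin (profin_top A) {\<theta> \<in> topspace (profin_top A). a \<in> profin_to_uf A \<theta>}"
      by simp
  qed (simp add: topspace_profin_top ultrafilter_profin_to_uf)
  show "continuous_map (stone_space (Lam A) (Reg A)) (profin_top A) (uf_to_profin A)"
  proof (rule continuous_map_profin_top)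
    fix Q :: "nat set" and q assume "finite Q"
    then have "{U \<in> topspace (stone_space (Lam A) (Reg A)). uf_to_profin A U Q = q} =
        {U. ultrafilter_on (Lam A) (Reg A) U \<and> den_fiber A Q q \<in> U}"
      using uf_to_profin_recognizes[OF _ recognizes_den_fiber] by (auto simp: topspace_stone_space)
    then show "openin (stone_space (Lam A) (Reg A))
        {U \<in> topspace (stone_space (Lam A) (Reg A)). uf_to_profin A U Q = q}"
      using openin_stone_space[OF recognizes_Reg[OF recognizes_den_fiber[OF \<open>finite Q\<close>]]] by simp
  qed (simp add: topspace_stone_space uf_to_profin_in_Profin)
qed (simp_all add: topspace_profin_top topspace_stone_space profin_to_uf_inverse uf_to_profin_inverse)

section \<open>Clopen sets of profinite terms\<close>

definition D_product_top :: "ty \<Rightarrow> (nat set \<Rightarrow> sem) topology" where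
  "D_product_top A = product_topology (\<lambda>Q. discrete_topology (D Q A)) {Q. finite Q}"

lemma topspace_D_product_top: "topspace (D_product_top A) = (\<Pi>\<^sub>E Q\<in>{Q. finite Q}. D Q A)"
  by (simp add: D_product_top_def)

lemma compact_space_D_product_top: "compact_space (D_product_top A)"
  unfolding D_product_top_def compact_space_product_topology
  using finite_subset[OF D_subset_interp finite_interp] by (simp add: compact_space_discrete_topology)

lemma continuous_map_D_product_top_component:
  "finite Q \<Longrightarrow> continuous_map (D_product_top A) (discrete_topology (D Q A)) (\<lambda>x. x Q)"
  unfolding D_product_top_def by (intro continuous_map_product_projection) simp

lemma closedin_D_product_top_components:
  assumes "finite Q" "finite Q'"
  shows "closedin (D_product_top A) {x \<in> topspace (D_product_top A). (x Q, x Q') \<in> R}"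
proof -
  have "continuous_map (D_product_top A) (discrete_topology (D Q A \<times> D Q' A)) (\<lambda>x. (x Q, x Q'))"
    unfolding prod_topology_discrete_topology using continuous_map_D_product_top_component assms
    by (intro continuous_map_pairedI)
  then have "closedin (D_product_top A)
      {x \<in> topspace (D_product_top A). (x Q, x Q') \<in> R \<inter> (D Q A \<times> D Q' A)}"
    by (rule closedin_continuous_map_preimage) simp
  moreover have "{x \<in> topspace (D_product_top A). (x Q, x Q') \<in> R \<inter> (D Q A \<times> D Q' A)} =
      {x \<in> topspace (D_product_top A). (x Q, x Q') \<in> R}"
    using assms by (auto simp: topspace_D_product_top)
  ultimately show ?thesis
    by simp
qed

lemma closedin_Profin: "closedin (D_product_top A) (Profin A)"
proof -
  let ?I = "{(Q, Q', f). finite Q \<and> finite Q' \<and> psurj Q Q' f}"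
  have "({}, {}, {}) \<in> ?I"
    by (simp add: psurj_def)
  then have "Profin A =
      (\<Inter>(Q, Q', f)\<in>?I. {x \<in> topspace (D_product_top A). (x Q, x Q') \<in> lrel Q Q' f A})"
    unfolding topspace_D_product_top Profin_def by (auto simp: PiE_iff extensional_def)
  with \<open>({}, {}, {}) \<in> ?I\<close> show ?thesis
    using closedin_D_product_top_components by (auto intro!: closedin_INT)
qed

lemma continuous_map_Profin_profin_top:
  "continuous_map (subtopology (D_product_top A) (Profin A)) (profin_top A) id"
proof (rule continuous_map_profin_top)
  fix Q :: "nat set" and q assume "finite Q"
  have "openin (D_product_top A) {x \<in> topspace (D_product_top A). x Q \<in> {q} \<inter> D Q A}"
    by (rule openin_continuous_map_preimage[OF continuous_map_D_product_top_component[OF \<open>finite Q\<close>]])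
      simp
  moreover have "{x \<in> topspace (subtopology (D_product_top A) (Profin A)). id x Q = q} =
      Profin A \<inter> {x \<in> topspace (D_product_top A). x Q \<in> {q} \<inter> D Q A}"
    using Profin_in_D[OF _ \<open>finite Q\<close>] by auto
  ultimately show "openin (subtopology (D_product_top A) (Profin A))
      {x \<in> topspace (subtopology (D_product_top A) (Profin A)). id x Q = q}"
    by (simp add: openin_subtopology_Int2)
qed simp

lemma compact_space_profin_top: "compact_space (profin_top A)"
proof -
  have "compact_space (subtopology (D_product_top A) (Profin A))"
    using compact_space_D_product_top closedin_Profin closedin_compact_space compact_space_subtopology
    by blast
  then have "compactin (profin_top A) (id ` topspace (subtopology (D_product_top A) (Profin A)))"
    unfolding compact_space_def using continuous_map_Profin_profin_top by (rule image_compactin)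
  moreover have "topspace (subtopology (D_product_top A) (Profin A)) = Profin A"
    using closedin_Profin closedin_subset by auto
  ultimately show ?thesis
    by (simp add: compact_space_def topspace_profin_top)
qed

lemma openin_profin_top_imp_profin_lang:
  assumes "openin (profin_top A) W" "\<theta> \<in> W"
  shows "\<exists>a\<in>Reg A. \<theta> \<in> profin_lang A a \<and> profin_lang A a \<subseteq> W"
proof -
  have "generate_topology_on {{\<theta> \<in> Profin A. \<theta> Q = q} | Q q. finite Q \<and> q \<in> D Q A} W"
    using assms(1) unfolding profin_top_def by (rule openin_topology_generated_by)
  then show ?thesis
    using assms(2)
  proof (induction arbitrary: \<theta>)
    case Empty
    then show ?case by simp
  next
    case (Int V W)
    then obtain a b where "a \<in> Reg A" "\<theta> \<in> profin_lang A a" "profin_lang A a \<subseteq> V"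
      and "b \<in> Reg A" "\<theta> \<in> profin_lang A b" "profin_lang A b \<subseteq> W"
      by blast
    then show ?case
      using Reg_Int profin_lang_Int by (intro bexI[of _ "a \<inter> b"]) auto
  next
    case (UN K)
    then show ?case by blast
  next
    case (Basis S)
    then obtain Q q where "finite Q" and S: "S = {\<theta> \<in> Profin A. \<theta> Q = q}"
      by blast
    then show ?case
      using Basis.prems recognizes_Reg[OF recognizes_den_fiber] profin_lang_den_fiber by blast
  qed
qed

lemma profin_lang_Union:
  "finite G \<Longrightarrow> G \<subseteq> Reg A \<Longrightarrow> \<Union>G \<in> Reg A \<and> profin_lang A (\<Union>G) = \<Union>(profin_lang A ` G)"
proof (induction G rule: finite_induct)
  case empty
  then show ?case
    using recognizes_Reg[OF recognizes_empty] profin_lang_empty by simp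
next
  case (insert a G)
  then show ?case
    using Reg_Un profin_lang_Un by simp
qed

lemma clopen_in_profin_lang_image:
  assumes opn: "openin (profin_top A) S" and cls: "closedin (profin_top A) S"
  shows "S \<in> profin_lang A ` Reg A"
proof -
  let ?G = "{a \<in> Reg A. profin_lang A a \<subseteq> S}"
  have "compactin (profin_top A) S"
    using closedin_compact_space[OF compact_space_profin_top cls] .
  moreover have "\<forall>V\<in>profin_lang A ` ?G. openin (profin_top A) V"
    using clopen_profin_lang by blast
  moreover have "S \<subseteq> \<Union>(profin_lang A ` ?G)"
    using openin_profin_top_imp_profin_lang[OF opn] by blast
  ultimately obtain F where F: "finite F" "F \<subseteq> profin_lang A ` ?G" "S \<subseteq> \<Union>F"
    unfolding compactin_def by meson
  then obtain G where G: "finite G" "G \<subseteq> ?G" "F = profin_lang A ` G"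
    by (meson finite_subset_image)
  then have "\<Union>G \<in> Reg A" "profin_lang A (\<Union>G) = \<Union>F"
    using profin_lang_Union[of G A] by auto
  moreover have "\<Union>F = S"
    using F(3) G(2,3) by blast
  ultimately show ?thesis
    by (metis image_eqI)
qed

lemma bij_betw_profin_lang_clopen:
  "bij_betw (profin_lang A) (Reg A) {S. openin (profin_top A) S \<and> closedin (profin_top A) S}"
  unfolding bij_betw_def
  using inj_on_profin_lang clopen_profin_lang clopen_in_profin_lang_image by blast

theorem mainTheorem7:
  fixes A :: ty
  shows "profin_top A homeomorphic_space stone_space (Lam A) (Reg A)
    \<and> (\<exists>\<phi>. bij_betw \<phi> (Reg A) {S. openin (profin_top A) S \<and> closedin (profin_top A) S}
          \<and> (\<forall>a\<in>Reg A. \<forall>b\<in>Reg A. \<phi> (a \<inter> b) = \<phi> a \<inter> \<phi> b)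
          \<and> (\<forall>a\<in>Reg A. \<phi> (Lam A - a) = topspace (profin_top A) - \<phi> a))"
proof (intro conjI exI)
  show "profin_top A homeomorphic_space stone_space (Lam A) (Reg A)"
    by (rule profin_top_homeomorphic_stone_space)
  show "bij_betw (profin_lang A) (Reg A) {S. openin (profin_top A) S \<and> closedin (profin_top A) S}"
    by (rule bij_betw_profin_lang_clopen)
  show "\<forall>a\<in>Reg A. \<forall>b\<in>Reg A. profin_lang A (a \<inter> b) = profin_lang A a \<inter> profin_lang A b"
    using profin_lang_Int by blast
  show "\<forall>a\<in>Reg A. profin_lang A (Lam A - a) = topspace (profin_top A) - profin_lang A a"
    using profin_lang_Diff topspace_profin_top by simp
qed

end
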